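(* Let $n\ge 6$ be divisible by $6$. The map $\varphi_{1,n}:\mathcal{P}_{1,n}\to W_n$ is a bijection, and for all $(x,k),(y,l)\in\mathcal{P}_{1,n}$, $$\rho_n((x,k),(y,l))\le 2+2\,d_\infty(\varphi_{1,n}(x,k),\varphi_{1,n}(y,l))$$ and $$d_\infty(\varphi_{1,n}(x,k),\varphi_{1,n}(y,l))\le 6\,\rho_n((x,k),(y,l))+12 .$$ Consequently, for all such pairs, $\tfrac14\rho_n\le d_\infty\circ(\varphi_{1,n}\times\varphi_{1,n})\le 18\,\rho_n$.
   Context: $\mathcal{G}_n=\mathbb{Z}_2\wr\mathbb{Z}_n$ is the set of pairs $(x,k)$ with $x\subseteq\mathbb{Z}_n$, $k\in\mathbb{Z}_n$; $\rho_n$ is the shortest-path metric of the graph on $\mathcal{G}_n$ in which $(x,k)$ is adjacent to $(x,k+1)$ and to $(x\triangle\{k+1\},k+1)$ (edges undirected; this is the Cayley graph with generators $t=(\emptyset,1)$, $ta=(\{1\},1)$). Identify $\mathbb{Z}_n$ with $\{0,1,\dots,n-1\}$. Let $P_1=\{n/6,n/6+1,\dots,5n/6\}\subseteq\mathbb{Z}_n$ and $\mathcal{P}_{1,n}=\{(x,k)\in\mathcal{G}_n: k\in P_1\}$ with the metric $\rho_n$ restricted. $T_n$ is the binary tree of depth $n$: its vertices are the $0/1$ sequences of length $\le n$ (including the empty one), with $A$ adjacent to $A$ extended by one symbol, and $d_T$ its graph metric; $|A|$ is the length of $A$. On $T_n\times T_n$ let $d_\infty((A_1,A_2),(B_1,B_2))=\max\{d_T(A_1,B_1),d_T(A_2,B_2)\}$,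 and $W_n=\{(A_1,A_2)\in T_n\times T_n: |A_1|+|A_2|=n,\ |A_1|,|A_2|\in[n/6,5n/6]\}$. Define $\varphi_{1,n}(x,k)=(A_1,A_2)$ where $A_1=(a_{1,0},\dots,a_{1,k-1})$ has length $k$ with $a_{1,j}=1$ iff $j\in x$, and $A_2=(a_{2,1},\dots,a_{2,n-k})$ has length $n-k$ with $a_{2,i}=1$ iff $n-i\in x$. *)

theory Defs
  imports Complex_Main
begin

inductive walk :: "('a \<Rightarrow> 'a \<Rightarrow> bool) \<Rightarrow> nat \<Rightarrow> 'a \<Rightarrow> 'a \<Rightarrow> bool"
  for E where
  walk_refl: "walk E 0 u u"
| walk_step: "E u w \<Longrightarrow> walk E m w v \<Longrightarrow> walk E (Suc m) u v"

definition graph_dist :: "('a \<Rightarrow> 'a \<Rightarrow> bool) \<Rightarrow> 'a \<Rightarrow> 'a \<Rightarrow> nat" where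
  "graph_dist E u v = (LEAST m. walk E m u v)"

(* Z_2 wr Z_n : pairs (x,k), x \<subseteq> {0..n-1}, k \<in> {0..n-1} *)
definition lamp_group :: "nat \<Rightarrow> (nat set \<times> nat) set" where
  "lamp_group n = {(x, k). x \<subseteq> {..<n} \<and> k < n}"

definition lamp_step :: "nat \<Rightarrow> (nat set \<times> nat) \<Rightarrow> (nat set \<times> nat) \<Rightarrow> bool" where
  "lamp_step n g h \<longleftrightarrow> (case g of (x, k) \<Rightarrow>
      h = (x, (k + 1) mod n) \<or> h = (x - {(k + 1) mod n} \<union> ({(k + 1) mod n} - x), (k + 1) mod n))"

(* undirected Cayley graph edges with generators t and ta *)
definition lamp_edge :: "nat \<Rightarrow> (nat set \<times> nat) \<Rightarrow> (nat set \<times> nat) \<Rightarrow> bool" where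
  "lamp_edge n g h \<longleftrightarrow> g \<in> lamp_group n \<and> h \<in> lamp_group n \<and> (lamp_step n g h \<or> lamp_step n h g)"

definition rho :: "nat \<Rightarrow> (nat set \<times> nat) \<Rightarrow> (nat set \<times> nat) \<Rightarrow> nat" where
  "rho n = graph_dist (lamp_edge n)"

definition P1 :: "nat \<Rightarrow> (nat set \<times> nat) set" where
  "P1 n = {(x, k) \<in> lamp_group n. n div 6 \<le> k \<and> k \<le> 5 * n div 6}"

(* binary tree of depth n: 0/1 sequences (as bool lists) of length \<le> n *)
definition tree_edge :: "nat \<Rightarrow> bool list \<Rightarrow> bool list \<Rightarrow> bool" where
  "tree_edge n A B \<longleftrightarrow> length A \<le> n \<and> length B \<le> n \<and>
     ((\<exists>b. B = A @ [b]) \<or> (\<exists>b. A = B @ [b]))"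

definition dT :: "nat \<Rightarrow> bool list \<Rightarrow> bool list \<Rightarrow> nat" where
  "dT n = graph_dist (tree_edge n)"

definition d_inf :: "nat \<Rightarrow> (bool list \<times> bool list) \<Rightarrow> (bool list \<times> bool list) \<Rightarrow> nat" where
  "d_inf n P Q = max (dT n (fst P) (fst Q)) (dT n (snd P) (snd Q))"

definition W :: "nat \<Rightarrow> (bool list \<times> bool list) set" where
  "W n = {(A1, A2). length A1 + length A2 = n \<and>
      n div 6 \<le> length A1 \<and> length A1 \<le> 5 * n div 6 \<and>
      n div 6 \<le> length A2 \<and> length A2 \<le> 5 * n div 6}"

definition phi1 :: "nat \<Rightarrow> (nat set \<times> nat) \<Rightarrow> (bool list \<times> bool list)" where
  "phi1 n g = (case g of (x, k) \<Rightarrow>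
      (map (\<lambda>j. j \<in> x) [0..<k], map (\<lambda>i. n - i \<in> x) [1..<n - k + 1]))"

end

theory Submission
  imports Defs
begin

text \<open>In the tree, \<open>dT n A B = length A + length B - 2 * lcp A B\<close>, where \<open>lcp A B\<close> is the length
  of the longest common prefix. Hence, with \<open>a\<close> and \<open>c\<close> the common-prefix lengths of the two
  components of \<open>phi1 n (x, k)\<close> and \<open>phi1 n (y, l)\<close>, the configurations \<open>x\<close> and \<open>y\<close> can differ only
  on \<open>{a..<n - c}\<close>, and \<open>k + l - 2a\<close> and \<open>2(n - c) - k - l\<close> are both at most \<open>d_inf\<close>.

  Upper bound, for \<open>k \<le> l\<close>: the lamplighter walks from \<open>k\<close> down to \<open>a\<close>, switches lamp \<open>a\<close>,
  walks up to \<open>max l (n - c - 1)\<close> setting every lamp it meets as in \<open>y\<close>, and returns to \<open>l\<close>;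
  this walk has length at most \<open>2 + 2 d_inf\<close>.

  Lower bound: a step that does not cross between \<open>n - 1\<close> and \<open>0\<close> changes \<open>phi1\<close> by at most
  \<open>3\<close> in \<open>d_inf\<close>. A walk that crosses there has length at least \<open>n/3 - 2\<close>, since both endpoints
  lie in \<open>[n/6, 5n/6]\<close>, while \<open>d_inf \<le> 2n\<close> always.\<close>

section \<open>Walks and graph distance\<close>

lemma walk_snoc: "walk E m u v \<Longrightarrow> E v w \<Longrightarrow> walk E (Suc m) u w"
  by (induction rule: walk.induct) (auto intro: walk.intros)

lemma walk_trans: "walk E a u v \<Longrightarrow> walk E b v w \<Longrightarrow> walk E (a + b) u w"
  by (induction rule: walk.induct) (auto intro: walk.intros)

lemma walk_sym:
  assumes "\<And>u v. E u v \<Longrightarrow> E v u"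
  shows "walk E m u v \<Longrightarrow> walk E m v u"
  by (induction rule: walk.induct) (auto intro: walk.intros walk_snoc assms)

lemma walk_zeroD: "walk E 0 u v \<Longrightarrow> u = v"
  by (erule walk.cases) auto

lemma graph_dist_le: "walk E m u v \<Longrightarrow> graph_dist E u v \<le> m"
  unfolding graph_dist_def by (rule Least_le)

lemma walk_graph_dist: "walk E m u v \<Longrightarrow> walk E (graph_dist E u v) u v"
  unfolding graph_dist_def by (rule LeastI)

lemma graph_dist_refl: "graph_dist E u u = 0"
  using graph_dist_le[OF walk_refl, of E u] by simp

lemma graph_dist_eq_0_iff: "walk E m u v \<Longrightarrow> graph_dist E u v = 0 \<longleftrightarrow> u = v"
  using walk_graph_dist walk_zeroD graph_dist_refl by metis

lemma graph_dist_triangle: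
  "walk E a u v \<Longrightarrow> walk E b v w \<Longrightarrow> graph_dist E u w \<le> graph_dist E u v + graph_dist E v w"
  by (rule graph_dist_le[OF walk_trans[OF walk_graph_dist walk_graph_dist]])

section \<open>Distance in the binary tree\<close>

fun lcp :: "'a list \<Rightarrow> 'a list \<Rightarrow> nat" where
  "lcp (a # A) (b # B) = (if a = b then Suc (lcp A B) else 0)"
| "lcp _ _ = 0"

lemma lcp_le_length: "lcp A B \<le> length A" "lcp A B \<le> length B"
  by (induction A B rule: lcp.induct) auto

lemma lcp_commute: "lcp A B = lcp B A"
  by (induction A B rule: lcp.induct) auto

lemma lcp_self: "lcp A A = length A"
  by (induction A) auto

lemma lcp_append_le: "lcp A B \<le> lcp (A @ C) B"
  by (induction A B rule: lcp.induct) auto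

lemma lcp_snoc_le: "lcp (A @ [c]) B \<le> Suc (lcp A B)"
proof (induction A arbitrary: B)
  case Nil
  then show ?case by (cases B) auto
next
  case (Cons a A)
  then show ?case by (cases B) auto
qed

lemma take_lcp: "take (lcp A B) A = take (lcp A B) B"
  by (induction A B rule: lcp.induct) auto

lemma nth_lcp: "j < lcp A B \<Longrightarrow> A ! j = B ! j"
  by (metis take_lcp nth_take)

lemma lcp_ge_common_prefix:
  "take p A = take p B \<Longrightarrow> p \<le> length A \<Longrightarrow> p \<le> length B \<Longrightarrow> p \<le> lcp A B"
proof (induction A B arbitrary: p rule: lcp.induct)
  case (1 a A b B)
  then show ?case by (cases p) (auto split: if_splits)
qed auto

lemma tree_edge_sym: "tree_edge n A B \<Longrightarrow> tree_edge n B A"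
  unfolding tree_edge_def by auto

lemma walk_tree_up: "length (A @ C) \<le> n \<Longrightarrow> walk (tree_edge n) (length C) A (A @ C)"
proof (induction C rule: rev_induct)
  case Nil
  then show ?case by (simp add: walk_refl)
next
  case (snoc c C)
  then show ?case by (auto intro!: walk_snoc simp: tree_edge_def)
qed

lemma walk_tree_down: "length (A @ C) \<le> n \<Longrightarrow> walk (tree_edge n) (length C) (A @ C) A"
  by (rule walk_sym[OF tree_edge_sym walk_tree_up])

lemma walk_tree_via_lcp:
  assumes "length A \<le> n" "length B \<le> n"
  shows "walk (tree_edge n) (length A + length B - 2 * lcp A B) A B"
proof -
  define p where "p = lcp A B"
  have B: "B = take p A @ drop p B" using take_lcp[of A B] by (simp add: p_def)
  have down: "walk (tree_edge n) (length (drop p A)) A (take p A)"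
    using walk_tree_down[of "take p A" "drop p A" n] assms(1) by simp
  have up: "walk (tree_edge n) (length (drop p B)) (take p A) B"
    using walk_tree_up[of "take p A" "drop p B" n] assms(2) B by simp
  have "length (drop p A) + length (drop p B) = length A + length B - 2 * p"
    using lcp_le_length[of A B] by (simp add: p_def)
  with walk_trans[OF down up] show ?thesis by (simp add: p_def)
qed

lemma tree_walk_length_ge: "walk (tree_edge n) m A B \<Longrightarrow> length A + length B - 2 * lcp A B \<le> m"
proof (induction rule: walk.induct)
  case (walk_refl A)
  then show ?case by (simp add: lcp_self)
next
  case (walk_step A C m B)
  from walk_step(1) consider c where "C = A @ [c]" | c where "A = C @ [c]"
    unfolding tree_edge_def by auto
  then show ?case
  proof cases
    case 1
    then show ?thesis
      using walk_step(3) lcp_snoc_le[of A c B] lcp_le_length[of A B] lcp_le_length[of C B] by simp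
  next
    case 2
    then show ?thesis
      using walk_step(3) lcp_append_le[of C B "[c]"] lcp_le_length[of A B] by simp
  qed
qed

lemma dT_eq:
  assumes "length A \<le> n" "length B \<le> n"
  shows "dT n A B = length A + length B - 2 * lcp A B"
proof -
  have "walk (tree_edge n) (length A + length B - 2 * lcp A B) A B"
    by (rule walk_tree_via_lcp[OF assms])
  then show ?thesis
    unfolding dT_def by (intro antisym graph_dist_le tree_walk_length_ge[OF walk_graph_dist])
qed

lemma dT_triangle:
  "length A \<le> n \<Longrightarrow> length B \<le> n \<Longrightarrow> length C \<le> n \<Longrightarrow> dT n A C \<le> dT n A B + dT n B C"
  unfolding dT_def by (rule graph_dist_triangle[OF walk_tree_via_lcp walk_tree_via_lcp])

lemma dT_le_common_prefix:
  assumes "length A \<le> n" "length B \<le> n" "take p A = take p B" "p \<le> length A" "p \<le> length B"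
  shows "dT n A B \<le> length A + length B - 2 * p"
  using dT_eq[OF assms(1,2)] lcp_ge_common_prefix[OF assms(3-5)] by simp

definition tree_nodes :: "nat \<Rightarrow> bool list set" where
  "tree_nodes n = {A. length A \<le> n}"

lemma d_inf_refl: "d_inf n P P = 0"
  unfolding d_inf_def dT_def by (simp add: graph_dist_refl)

lemma d_inf_commute:
  "P \<in> tree_nodes n \<times> tree_nodes n \<Longrightarrow> Q \<in> tree_nodes n \<times> tree_nodes n \<Longrightarrow>
    d_inf n P Q = d_inf n Q P"
  unfolding d_inf_def tree_nodes_def by (auto simp: dT_eq lcp_commute)

lemma d_inf_triangle:
  "P \<in> tree_nodes n \<times> tree_nodes n \<Longrightarrow> Q \<in> tree_nodes n \<times> tree_nodes n \<Longrightarrow>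
    R \<in> tree_nodes n \<times> tree_nodes n \<Longrightarrow> d_inf n P R \<le> d_inf n P Q + d_inf n Q R"
  unfolding d_inf_def tree_nodes_def
  using dT_triangle[of "fst P" n "fst Q" "fst R"] dT_triangle[of "snd P" n "snd Q" "snd R"]
  by auto

lemma d_inf_le: "P \<in> tree_nodes n \<times> tree_nodes n \<Longrightarrow> Q \<in> tree_nodes n \<times> tree_nodes n \<Longrightarrow>
    d_inf n P Q \<le> 2 * n"
  unfolding d_inf_def tree_nodes_def by (auto simp: dT_eq)

lemma d_inf_eq_0_iff:
  "P \<in> tree_nodes n \<times> tree_nodes n \<Longrightarrow> Q \<in> tree_nodes n \<times> tree_nodes n \<Longrightarrow>
    d_inf n P Q = 0 \<longleftrightarrow> P = Q"
  unfolding d_inf_def dT_def tree_nodes_def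
  by (auto simp: graph_dist_eq_0_iff[OF walk_tree_via_lcp] prod_eq_iff graph_dist_refl)

section \<open>Walks of the lamplighter\<close>

lemma mem_lamp_group [simp]: "(x, k) \<in> lamp_group n \<longleftrightarrow> x \<subseteq> {..<n} \<and> k < n"
  by (simp add: lamp_group_def)

lemma lamp_edge_sym: "lamp_edge n g h \<Longrightarrow> lamp_edge n h g"
  unfolding lamp_edge_def by auto

lemma lamp_edge_in_group: "lamp_edge n g h \<Longrightarrow> g \<in> lamp_group n \<and> h \<in> lamp_group n"
  unfolding lamp_edge_def by auto

lemma lamp_edge_succ:
  assumes "k < n" "x \<subseteq> {..<n}" "x' \<subseteq> {..<n}"
    and "x' - {(k + 1) mod n} = x - {(k + 1) mod n}"
  shows "lamp_edge n (x, k) (x', (k + 1) mod n)"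
proof -
  let ?j = "(k + 1) mod n"
  have "x' = x \<or> x' = x - {?j} \<union> ({?j} - x)"
    using assms(4) by (cases "?j \<in> x \<longleftrightarrow> ?j \<in> x'") blast+
  then have "lamp_step n (x, k) (x', ?j)"
    unfolding lamp_step_def by simp
  moreover have "?j < n" using assms(1) by simp
  ultimately show ?thesis using assms unfolding lamp_edge_def by simp
qed

definition override_lamps :: "nat set \<Rightarrow> nat set \<Rightarrow> nat set \<Rightarrow> nat set" where
  "override_lamps x y S = (x - S) \<union> (y \<inter> S)"

lemma override_lamps_subset:
  "x \<subseteq> {..<n} \<Longrightarrow> y \<subseteq> {..<n} \<Longrightarrow> override_lamps x y S \<subseteq> {..<n}"
  unfolding override_lamps_def by auto

lemma override_lamps_same [simp]: "override_lamps y y S = y"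
  unfolding override_lamps_def by auto

lemma walk_sweep_right:
  assumes "x \<subseteq> {..<n}" "y \<subseteq> {..<n}"
  shows "p \<le> q \<Longrightarrow> q < n \<Longrightarrow>
    walk (lamp_edge n) (q - p) (x, p) (override_lamps x y {p<..q}, q)"
proof (induction q)
  case 0
  then show ?case by (simp add: override_lamps_def walk_refl)
next
  case (Suc q)
  show ?case
  proof (cases "p = Suc q")
    case True
    then show ?thesis by (simp add: override_lamps_def walk_refl)
  next
    case False
    then have "p \<le> q" using Suc.prems by simp
    then have "walk (lamp_edge n) (q - p) (x, p) (override_lamps x y {p<..q}, q)"
      using Suc by simp
    moreover have "lamp_edge n (override_lamps x y {p<..q}, q) (override_lamps x y {p<..Suc q}, Suc q)"
    proof -
      have "override_lamps x y {p<..Suc q} - {Suc q} = override_lamps x y {p<..q} - {Suc q}"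
        unfolding override_lamps_def by auto
      moreover have "(q + 1) mod n = Suc q" using Suc.prems by simp
      ultimately show ?thesis
        using lamp_edge_succ[of q n, OF _ override_lamps_subset[OF assms] override_lamps_subset[OF assms]]
          Suc.prems by simp
    qed
    ultimately have "walk (lamp_edge n) (Suc (q - p)) (x, p) (override_lamps x y {p<..Suc q}, Suc q)"
      by (rule walk_snoc)
    then show ?thesis using \<open>p \<le> q\<close> by (simp add: Suc_diff_le)
  qed
qed

lemma walk_sweep_left:
  assumes "x \<subseteq> {..<n}" "y \<subseteq> {..<n}" "p \<le> q" "q < n"
  shows "walk (lamp_edge n) (q - p) (x, q) (override_lamps x y {p<..q}, p)"
proof -
  let ?x' = "override_lamps x y {p<..q}"
  have restore: "override_lamps ?x' x {p<..q} = x" unfolding override_lamps_def by auto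
  have "walk (lamp_edge n) (q - p) (?x', p) (override_lamps ?x' x {p<..q}, q)"
    by (rule walk_sweep_right[OF override_lamps_subset[OF assms(1,2)] assms(1) assms(3,4)])
  from walk_sym[OF lamp_edge_sym this] show ?thesis unfolding restore .
qed

text \<open>A move toggles only the lamp at the position moved to, so switching the lamp at the
  current position takes a step back and a step forth.\<close>

lemma walk_switch_lamp:
  assumes "x \<subseteq> {..<n}" "y \<subseteq> {..<n}" "a < n"
  shows "walk (lamp_edge n) 2 (x, a) (override_lamps x y {a}, a)"
proof -
  define b where "b = (a + (n - 1)) mod n"
  have b: "b < n" "(b + 1) mod n = a"
    using assms(3) by (simp_all add: b_def mod_Suc_eq)
  let ?x' = "override_lamps x y {a}"
  have x': "?x' \<subseteq> {..<n}" "?x' - {a} = x - {a}"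
    using override_lamps_subset[OF assms(1,2)] unfolding override_lamps_def by auto
  have e1: "lamp_edge n (?x', b) (x, a)"
    using lamp_edge_succ[OF b(1) x'(1) assms(1)] x'(2) b(2) by simp
  have e2: "lamp_edge n (?x', b) (?x', a)"
    using lamp_edge_succ[OF b(1) x'(1) x'(1)] b(2) by simp
  show ?thesis
    unfolding numeral_2_eq_2
    by (rule walk_step[OF lamp_edge_sym[OF e1] walk_step[of "lamp_edge n", OF e2 walk_refl]])
qed

lemma walk_via_interval:
  assumes "x \<subseteq> {..<n}" "y \<subseteq> {..<n}" "a \<le> k" "a \<le> l" "k \<le> M" "l \<le> M" "M < n"
    and agree: "\<And>j. j \<notin> {a..M} \<Longrightarrow> j \<in> x \<longleftrightarrow> j \<in> y"
  shows "walk (lamp_edge n) ((k - a) + 2 + (M - a) + (M - l)) (x, k) (y, l)"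
proof -
  define x1 where "x1 = override_lamps x y {a<..k}"
  define x2 where "x2 = override_lamps x1 y {a}"
  have x1: "x1 \<subseteq> {..<n}"
    unfolding x1_def by (rule override_lamps_subset[OF assms(1,2)])
  have x2: "x2 \<subseteq> {..<n}"
    unfolding x2_def by (rule override_lamps_subset[OF x1 assms(2)])
  have x3: "override_lamps x2 y {a<..M} = y"
  proof (rule set_eqI)
    fix j
    show "j \<in> override_lamps x2 y {a<..M} \<longleftrightarrow> j \<in> y"
      using agree[of j] assms(5) unfolding x2_def x1_def override_lamps_def
      by (cases "j \<in> {a..M}") auto
  qed
  have w1: "walk (lamp_edge n) (k - a) (x, k) (x1, a)"
    unfolding x1_def using assms by (intro walk_sweep_left) auto
  have w2: "walk (lamp_edge n) 2 (x1, a) (x2, a)"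
    unfolding x2_def using x1 assms by (intro walk_switch_lamp) auto
  have w3: "walk (lamp_edge n) (M - a) (x2, a) (y, M)"
    using walk_sweep_right[OF x2 assms(2), of a M] assms(3,5,7) x3 by simp
  have w4: "walk (lamp_edge n) (M - l) (y, M) (y, l)"
    using walk_sweep_left[OF assms(2,2,6,7)] by simp
  show ?thesis by (rule walk_trans[OF walk_trans[OF walk_trans[OF w1 w2] w3] w4])
qed

section \<open>The map \<open>phi1\<close>\<close>

lemma length_phi1 [simp]:
  "length (fst (phi1 n (x, k))) = k" "length (snd (phi1 n (x, k))) = n - k"
  unfolding phi1_def by (simp_all del: upt_Suc)

lemma phi1_fst_nth: "j < k \<Longrightarrow> fst (phi1 n (x, k)) ! j = (j \<in> x)"
  unfolding phi1_def by simp

lemma phi1_snd_nth: "t < n - k \<Longrightarrow> snd (phi1 n (x, k)) ! t = (n - Suc t \<in> x)"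
  unfolding phi1_def by (simp del: upt_Suc)

lemma phi1_in_tree_nodes: "g \<in> lamp_group n \<Longrightarrow> phi1 n g \<in> tree_nodes n \<times> tree_nodes n"
  by (cases g) (auto simp: tree_nodes_def mem_Times_iff)

lemma phi1_agree_below:
  assumes "j < lcp (fst (phi1 n (x, k))) (fst (phi1 n (y, l)))"
  shows "j \<in> x \<longleftrightarrow> j \<in> y"
  using assms nth_lcp[OF assms] lcp_le_length[of "fst (phi1 n (x, k))" "fst (phi1 n (y, l))"]
  by (simp add: phi1_fst_nth)

lemma phi1_agree_above:
  assumes "n - lcp (snd (phi1 n (x, k))) (snd (phi1 n (y, l))) \<le> j" "j < n"
  shows "j \<in> x \<longleftrightarrow> j \<in> y"
proof -
  define t where "t = n - Suc j"
  have t: "t < lcp (snd (phi1 n (x, k))) (snd (phi1 n (y, l)))"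
    using assms unfolding t_def by linarith
  then have "t < n - k" "t < n - l"
    using lcp_le_length[of "snd (phi1 n (x, k))" "snd (phi1 n (y, l))"] by simp_all
  moreover have "n - Suc t = j" using assms(2) unfolding t_def by simp
  ultimately show ?thesis using nth_lcp[OF t] by (simp add: phi1_snd_nth)
qed

lemma phi1_inj_on: "inj_on (phi1 n) (lamp_group n)"
proof (rule inj_onI)
  fix g h assume "g \<in> lamp_group n" "h \<in> lamp_group n" and eq: "phi1 n g = phi1 n h"
  then obtain x k y l where g: "g = (x, k)" and h: "h = (y, l)"
    and x: "x \<subseteq> {..<n}" and y: "y \<subseteq> {..<n}"
    by (metis mem_lamp_group prod.exhaust)
  have "k = l" using arg_cong[OF eq, of "\<lambda>P. length (fst P)"] unfolding g h by simp
  have "j \<in> x \<longleftrightarrow> j \<in> y" if "j < n" for j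
  proof (cases "j < k")
    case True
    then show ?thesis
      using phi1_agree_below[of j n x k y l] eq \<open>k = l\<close> unfolding g h by (simp add: lcp_self)
  next
    case False
    then show ?thesis
      using phi1_agree_above[of n x k y l j] that eq \<open>k = l\<close> unfolding g h by (simp add: lcp_self)
  qed
  then have "x = y" using x y by blast
  then show "g = h" using g h \<open>k = l\<close> by simp
qed

lemma d_inf_phi1_eq_0_iff:
  "g \<in> lamp_group n \<Longrightarrow> h \<in> lamp_group n \<Longrightarrow> d_inf n (phi1 n g) (phi1 n h) = 0 \<longleftrightarrow> g = h"
  using d_inf_eq_0_iff[OF phi1_in_tree_nodes phi1_in_tree_nodes] inj_onD[OF phi1_inj_on] by metis

lemma P1_subset_lamp_group: "P1 n \<subseteq> lamp_group n"
  unfolding P1_def by auto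

lemma phi1_image_P1:
  assumes "6 \<le> n" "6 dvd n"
  shows "phi1 n ` P1 n = W n"
proof
  obtain t where n: "n = 6 * t" using assms(2) by blast
  show "phi1 n ` P1 n \<subseteq> W n"
    unfolding P1_def W_def phi1_def n by auto
  show "W n \<subseteq> phi1 n ` P1 n"
  proof
    fix P assume "P \<in> W n"
    then obtain A1 A2 where P: "P = (A1, A2)" and len: "length A1 + length A2 = n"
      "t \<le> length A1" "length A1 \<le> 5 * t"
      unfolding W_def n by auto
    define k where "k = length A1"
    define x where "x = {j. j < k \<and> A1 ! j} \<union> {j. k \<le> j \<and> j < n \<and> A2 ! (n - Suc j)}"
    have k: "k < n" using len assms(1) n unfolding k_def by simp
    have "fst (phi1 n (x, k)) = A1"
      by (rule nth_equalityI) (auto simp: phi1_fst_nth x_def k_def)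
    moreover have "snd (phi1 n (x, k)) = A2"
    proof (rule nth_equalityI)
      show "length (snd (phi1 n (x, k))) = length A2" using len k_def by simp
    next
      fix t assume "t < length (snd (phi1 n (x, k)))"
      then have "t < n - k" by simp
      then show "snd (phi1 n (x, k)) ! t = A2 ! t"
        by (auto simp: phi1_snd_nth x_def Suc_diff_Suc)
    qed
    moreover have "(x, k) \<in> P1 n"
      using k len unfolding P1_def x_def k_def n by auto
    ultimately show "P \<in> phi1 n ` P1 n" unfolding P by (metis image_eqI prod.collapse)
  qed
qed

section \<open>The upper bound for \<open>rho\<close>\<close>

lemma lamp_walk_le_d_inf_ordered:
  assumes "(x, k) \<in> lamp_group n" "(y, l) \<in> lamp_group n" "k \<le> l"
  shows "\<exists>m. walk (lamp_edge n) m (x, k) (y, l) \<and> m \<le> 2 + 2 * d_inf n (phi1 n (x, k)) (phi1 n (y, l))"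
proof -
  have x: "x \<subseteq> {..<n}" "k < n" and y: "y \<subseteq> {..<n}" "l < n" using assms by auto
  define D where "D = d_inf n (phi1 n (x, k)) (phi1 n (y, l))"
  define a where "a = lcp (fst (phi1 n (x, k))) (fst (phi1 n (y, l)))"
  define c where "c = lcp (snd (phi1 n (x, k))) (snd (phi1 n (y, l)))"
  define M where "M = max l (n - c - 1)"
  have a: "a \<le> k" "a \<le> l"
    using lcp_le_length[of "fst (phi1 n (x, k))" "fst (phi1 n (y, l))"] by (simp_all add: a_def)
  have c: "c \<le> n - k" "c \<le> n - l"
    using lcp_le_length[of "snd (phi1 n (x, k))" "snd (phi1 n (y, l))"] by (simp_all add: c_def)
  have "dT n (fst (phi1 n (x, k))) (fst (phi1 n (y, l))) \<le> D"
    and "dT n (snd (phi1 n (x, k))) (snd (phi1 n (y, l))) \<le> D"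
    unfolding D_def d_inf_def by simp_all
  then have a_bound: "k + l \<le> D + 2 * a" and c_bound: "(n - k) + (n - l) \<le> D + 2 * c"
    using x y by (simp_all add: dT_eq a_def c_def)
  have M: "k \<le> M" "l \<le> M" "M < n" "M \<le> n - c" using c x y assms(3) unfolding M_def by auto
  have agree: "j \<in> x \<longleftrightarrow> j \<in> y" if "j \<notin> {a..M}" for j
  proof (cases "j < a")
    case True
    then show ?thesis using phi1_agree_below a_def by blast
  next
    case False
    then have "n - c \<le> j" using that M_def by auto
    then show ?thesis using phi1_agree_above[of n x k y l j] x y c_def by (cases "j < n") auto
  qed
  have "walk (lamp_edge n) ((k - a) + 2 + (M - a) + (M - l)) (x, k) (y, l)"
    using walk_via_interval[OF x(1) y(1) a M(1,2,3)] agree by blast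
  moreover have "(k - a) + 2 + (M - a) + (M - l) \<le> 2 + 2 * D"
    using a_bound c_bound a c M assms(3) by linarith
  ultimately show ?thesis unfolding D_def by blast
qed

lemma lamp_walk_le_d_inf:
  assumes "g \<in> lamp_group n" "h \<in> lamp_group n"
  shows "\<exists>m. walk (lamp_edge n) m g h \<and> m \<le> 2 + 2 * d_inf n (phi1 n g) (phi1 n h)"
proof (cases "snd g \<le> snd h")
  case True
  then show ?thesis using lamp_walk_le_d_inf_ordered[of "fst g" "snd g" n "fst h" "snd h"] assms by simp
next
  case False
  then obtain m where walk: "walk (lamp_edge n) m h g"
    and m: "m \<le> 2 + 2 * d_inf n (phi1 n h) (phi1 n g)"
    using lamp_walk_le_d_inf_ordered[of "fst h" "snd h" n "fst g" "snd g"] assms by auto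
  have "d_inf n (phi1 n h) (phi1 n g) = d_inf n (phi1 n g) (phi1 n h)"
    using d_inf_commute[OF phi1_in_tree_nodes[OF assms(2)] phi1_in_tree_nodes[OF assms(1)]] .
  then show ?thesis using walk_sym[OF lamp_edge_sym walk] m by auto
qed

lemma rho_le_d_inf:
  assumes "g \<in> lamp_group n" "h \<in> lamp_group n"
  shows "rho n g h \<le> 2 + 2 * d_inf n (phi1 n g) (phi1 n h)"
proof -
  obtain m where "walk (lamp_edge n) m g h" "m \<le> 2 + 2 * d_inf n (phi1 n g) (phi1 n h)"
    using lamp_walk_le_d_inf[OF assms] by blast
  then show ?thesis unfolding rho_def by (blast intro: order_trans graph_dist_le)
qed

lemma walk_rho:
  assumes "g \<in> lamp_group n" "h \<in> lamp_group n"
  shows "walk (lamp_edge n) (rho n g h) g h"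
  using lamp_walk_le_d_inf[OF assms] unfolding rho_def by (blast intro: walk_graph_dist)

lemma rho_eq_0_iff:
  assumes "g \<in> lamp_group n" "h \<in> lamp_group n"
  shows "rho n g h = 0 \<longleftrightarrow> g = h"
  using graph_dist_eq_0_iff[OF walk_rho[OF assms, unfolded rho_def]] unfolding rho_def .

section \<open>The lower bound for \<open>rho\<close>\<close>

lemma phi1_step_d_inf:
  assumes "Suc k < n" "x' - {Suc k} = x - {Suc k}"
  shows "d_inf n (phi1 n (x, k)) (phi1 n (x', Suc k)) \<le> 3"
proof -
  have agree: "j \<in> x \<longleftrightarrow> j \<in> x'" if "j \<noteq> Suc k" for j
    using assms(2) that by blast
  have "take k (fst (phi1 n (x, k))) = take k (fst (phi1 n (x', Suc k)))"
    by (rule nth_equalityI) (simp_all add: phi1_fst_nth agree)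
  then have fst_le: "dT n (fst (phi1 n (x, k))) (fst (phi1 n (x', Suc k))) \<le> 1"
    using dT_le_common_prefix[of "fst (phi1 n (x, k))" n "fst (phi1 n (x', Suc k))" k] assms(1)
    by simp
  define r where "r = n - k - 2"
  have r: "n - k = r + 2" "n - Suc k = r + 1" using assms(1) unfolding r_def by simp_all
  have "take r (snd (phi1 n (x, k))) = take r (snd (phi1 n (x', Suc k)))"
    unfolding r_def by (rule nth_equalityI) (simp_all add: phi1_snd_nth agree)
  then have snd_le: "dT n (snd (phi1 n (x, k))) (snd (phi1 n (x', Suc k))) \<le> 3"
    using dT_le_common_prefix[of "snd (phi1 n (x, k))" n "snd (phi1 n (x', Suc k))" r] r
    by simp
  show ?thesis using fst_le snd_le unfolding d_inf_def by simp
qed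

text \<open>The distance of a position from the edge between \<open>n - 1\<close> and \<open>0\<close>, across which
  \<open>phi1\<close> is discontinuous.\<close>

definition seam_dist :: "nat \<Rightarrow> nat \<Rightarrow> nat" where
  "seam_dist n k = min k (n - 1 - k)"

lemma seam_dist_Suc:
  "Suc k < n \<Longrightarrow> seam_dist n (Suc k) \<le> Suc (seam_dist n k)"
  "Suc k < n \<Longrightarrow> seam_dist n k \<le> Suc (seam_dist n (Suc k))"
  unfolding seam_dist_def by auto

lemma lamp_step_cases:
  assumes "lamp_step n (x, k) (x', k')" "k < n"
  obtains "Suc k < n" "k' = Suc k" "x' - {Suc k} = x - {Suc k}"
    | "k = n - 1" "k' = 0"
proof -
  have k': "k' = (k + 1) mod n" and x': "x' - {k'} = x - {k'}"
    using assms(1) unfolding lamp_step_def by blast+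
  show thesis
  proof (cases "Suc k < n")
    case True
    then show thesis using that(1) k' x' by simp
  next
    case False
    then have "k = n - 1" using assms(2) by simp
    then show thesis using that(2) k' assms(2) by simp
  qed
qed

lemma lamp_edge_seam_dist:
  assumes "lamp_edge n g h"
  shows "seam_dist n (snd h) \<le> seam_dist n (snd g) + 1"
proof -
  have step: "seam_dist n k' \<le> seam_dist n k + 1 \<and> seam_dist n k \<le> seam_dist n k' + 1"
    if "lamp_step n (x, k) (x', k')" "k < n" for x k x' k'
    using that by (cases rule: lamp_step_cases) (simp_all add: seam_dist_Suc, simp add: seam_dist_def)
  obtain x k x' k' where g: "g = (x, k)" and h: "h = (x', k')" by fastforce
  have "k < n" "k' < n" and "lamp_step n g h \<or> lamp_step n h g"
    using assms lamp_edge_in_group[OF assms] unfolding g h lamp_edge_def by auto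
  then show ?thesis using step[of x k x' k'] step[of x' k' x k] unfolding g h by auto
qed

lemma lamp_edge_d_inf:
  assumes "lamp_edge n g h"
  shows "d_inf n (phi1 n g) (phi1 n h) \<le> 3 \<or> seam_dist n (snd g) = 0 \<and> seam_dist n (snd h) = 0"
proof -
  have step: "d_inf n (phi1 n (x, k)) (phi1 n (x', k')) \<le> 3 \<or> seam_dist n k = 0 \<and> seam_dist n k' = 0"
    if "lamp_step n (x, k) (x', k')" "k < n" for x k x' k'
    using that by (cases rule: lamp_step_cases) (simp_all add: seam_dist_def phi1_step_d_inf)
  have commute: "d_inf n (phi1 n g) (phi1 n h) = d_inf n (phi1 n h) (phi1 n g)"
    using d_inf_commute[OF phi1_in_tree_nodes phi1_in_tree_nodes] lamp_edge_in_group[OF assms] by blast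
  obtain x k x' k' where g: "g = (x, k)" and h: "h = (x', k')" by fastforce
  have "k < n" "k' < n" and "lamp_step n g h \<or> lamp_step n h g"
    using assms lamp_edge_in_group[OF assms] unfolding g h lamp_edge_def by auto
  then show ?thesis using step[of x k x' k'] step[of x' k' x k] commute unfolding g h by auto
qed

lemma walk_seam_dist:
  "walk (lamp_edge n) m g h \<Longrightarrow> seam_dist n (snd h) \<le> seam_dist n (snd g) + m"
proof (induction rule: walk.induct)
  case (walk_step g z m h)
  then show ?case using lamp_edge_seam_dist[OF walk_step(1)] by simp
qed simp

lemma walk_d_inf_or_seam:
  "walk (lamp_edge n) m g h \<Longrightarrow> h \<in> lamp_group n \<Longrightarrow>
    d_inf n (phi1 n g) (phi1 n h) \<le> 3 * m \<or> seam_dist n (snd g) + seam_dist n (snd h) \<le> m"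
proof (induction rule: walk.induct)
  case (walk_refl g)
  then show ?case by (simp add: d_inf_refl)
next
  case (walk_step g z m h)
  have "d_inf n (phi1 n g) (phi1 n h) \<le> d_inf n (phi1 n g) (phi1 n z) + d_inf n (phi1 n z) (phi1 n h)"
    using d_inf_triangle[OF phi1_in_tree_nodes phi1_in_tree_nodes phi1_in_tree_nodes]
      lamp_edge_in_group[OF walk_step(1)] walk_step(4) by blast
  moreover have "d_inf n (phi1 n z) (phi1 n h) \<le> 3 * m \<or> seam_dist n (snd z) + seam_dist n (snd h) \<le> m"
    using walk_step(3,4) .
  moreover have "seam_dist n (snd g) \<le> seam_dist n (snd z) + 1"
    using lamp_edge_seam_dist[OF lamp_edge_sym[OF walk_step(1)]] .
  moreover have "seam_dist n (snd h) \<le> seam_dist n (snd z) + m"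
    using walk_seam_dist[OF walk_step(2)] .
  ultimately show ?case
    using lamp_edge_d_inf[OF walk_step(1)] by auto
qed

lemma d_inf_le_rho:
  assumes "6 dvd n" "g \<in> P1 n" "h \<in> P1 n"
  shows "d_inf n (phi1 n g) (phi1 n h) \<le> 6 * rho n g h + 12"
proof -
  obtain t where n: "n = 6 * t" using assms(1) by blast
  have gh: "g \<in> lamp_group n" "h \<in> lamp_group n"
    using assms(2,3) P1_subset_lamp_group by auto
  have "t \<le> seam_dist n (snd g) + 1" "t \<le> seam_dist n (snd h) + 1"
    using assms(2,3) unfolding n P1_def seam_dist_def by auto
  moreover have "d_inf n (phi1 n g) (phi1 n h) \<le> 2 * n"
    using gh by (intro d_inf_le phi1_in_tree_nodes)
  moreover have "d_inf n (phi1 n g) (phi1 n h) \<le> 3 * rho n g h \<or>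
      seam_dist n (snd g) + seam_dist n (snd h) \<le> rho n g h"
    using walk_d_inf_or_seam[OF walk_rho] gh by simp
  ultimately show ?thesis unfolding n by linarith
qed

theorem mainTheorem3:
  fixes n :: nat
  assumes "n \<ge> 6" and "6 dvd n"
  shows "bij_betw (phi1 n) (P1 n) (W n) \<and>
    (\<forall>g\<in>P1 n. \<forall>h\<in>P1 n.
       rho n g h \<le> 2 + 2 * d_inf n (phi1 n g) (phi1 n h) \<and>
       d_inf n (phi1 n g) (phi1 n h) \<le> 6 * rho n g h + 12 \<and>
       real (rho n g h) / 4 \<le> real (d_inf n (phi1 n g) (phi1 n h)) \<and>
       real (d_inf n (phi1 n g) (phi1 n h)) \<le> 18 * real (rho n g h))"
proof (intro conjI ballI)
  show "bij_betw (phi1 n) (P1 n) (W n)"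
    using inj_on_subset[OF phi1_inj_on P1_subset_lamp_group] phi1_image_P1[OF assms]
    by (rule bij_betw_imageI)
next
  fix g h assume "g \<in> P1 n" "h \<in> P1 n"
  then have gh: "g \<in> lamp_group n" "h \<in> lamp_group n" using P1_subset_lamp_group by auto
  let ?D = "d_inf n (phi1 n g) (phi1 n h)" and ?r = "rho n g h"
  show upper: "?r \<le> 2 + 2 * ?D" using rho_le_d_inf[OF gh] .
  show lower: "?D \<le> 6 * ?r + 12" using d_inf_le_rho assms(2) \<open>g \<in> P1 n\<close> \<open>h \<in> P1 n\<close> by blast
  have "?r \<le> 4 * ?D"
    using upper rho_eq_0_iff[OF gh] d_inf_phi1_eq_0_iff[OF gh] by (cases "?D = 0") auto
  then show "real ?r / 4 \<le> real ?D" by linarith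
  have "?D \<le> 18 * ?r"
    using lower rho_eq_0_iff[OF gh] d_inf_phi1_eq_0_iff[OF gh] by (cases "?r = 0") auto
  then show "real ?D \<le> 18 * real ?r" by linarith
qed

end
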